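(* For a countable $L$-structure $\mathbb X$ the following are equivalent: (a) $\mathbb X$ is weakly reversible; (b) for every countable $L$-structure $\mathbb Y$, $\mathbb X\equiv_{\mathcal P_{\infty\omega}}\mathbb Y$ implies $\mathbb Y\cong\mathbb X$; (c) the theory $\mathrm{Th}_{\mathcal P_{\infty\omega}\cup\mathcal N_{\infty\omega}}(\mathbb X)$ of all sentences of $\mathcal P_{\infty\omega}\cup\mathcal N_{\infty\omega}$ true in $\mathbb X$ is $\omega$-categorical, i.e. every countable $L$-structure satisfying all these sentences is isomorphic to $\mathbb X$.
   Context: $L=\langle R_i:i\in I\rangle$ is a relational language, $R_i$ of arity $n_i$. A condensation from $\mathbb X$ onto $\mathbb Y$ is a bijection $F:X\to Y$ such that for all $i\in I$ and $\bar x\in X^{n_i}$, $\bar x\in R_i^{\mathbb X}$ implies $F\bar x\in R_i^{\mathbb Y}$ (where $F\bar x$ is coordinatewise). $\mathbb X\sim_c\mathbb Y$ means there are condensations from $\mathbb X$ onto $\mathbb Y$ and from $\mathbb Y$ onto $\mathbb X$. $\mathbb X$ is weakly reversible iff for every $L$-structure $\mathbb Y$, $\mathbb Y\sim_c\mathbb X$ implies $\mathbb Y\cong\mathbb X$. Formula classes: $\mathcal P_0$ consists of all atomic formulas ($v_\alpha=v_\beta$, $R_i(v_{\alpha_1},\dots,v_{\alpha_{n_i}})$) and all $\neg\,v_\alpha=v_\beta$. $\mathcal N_0$ consists of all $\neg R_i(v_{\alpha_1},\dots,v_{\alpha_{n_i}})$, all $v_\alpha=v_\beta$ and all $\neg\,v_\alpha=v_\beta$.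 $\mathcal P_{\infty\omega}$ (resp. $\mathcal N_{\infty\omega}$) is the closure of $\mathcal P_0$ (resp. $\mathcal N_0$) under $\forall v$, $\exists v$ and conjunctions and disjunctions of arbitrary sets of formulas (no negation). For a class $\mathcal F$ of formulas, $\mathbb X\equiv_{\mathcal F}\mathbb Y$ means $\mathbb X$ and $\mathbb Y$ satisfy the same sentences of $\mathcal F$. *)

theory Defs
  imports Main "HOL-Library.Countable_Set"
begin

text \<open>A relational language is given by an index type 'i together with an arity
function ar.\<close>

record ('i, 'a) lstruct =
  univ :: "'a set"
  rels :: "'i \<Rightarrow> 'a list set"

definition is_struct :: "('i \<Rightarrow> nat) \<Rightarrow> ('i, 'a) lstruct \<Rightarrow> bool" where
  "is_struct ar M \<longleftrightarrow> univ M \<noteq> {} \<and>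
     (\<forall>i. \<forall>xs \<in> rels M i. length xs = ar i \<and> set xs \<subseteq> univ M)"

definition condensation :: "('i, 'a) lstruct \<Rightarrow> ('i, 'b) lstruct \<Rightarrow> ('a \<Rightarrow> 'b) \<Rightarrow> bool" where
  "condensation X Y F \<longleftrightarrow> bij_betw F (univ X) (univ Y) \<and>
     (\<forall>i. \<forall>xs \<in> rels X i. map F xs \<in> rels Y i)"

definition cond_equiv :: "('i, 'a) lstruct \<Rightarrow> ('i, 'b) lstruct \<Rightarrow> bool" where
  "cond_equiv X Y \<longleftrightarrow> (\<exists>F. condensation X Y F) \<and> (\<exists>G. condensation Y X G)"

definition isomorphism :: "('i \<Rightarrow> nat) \<Rightarrow> ('i, 'a) lstruct \<Rightarrow> ('i, 'b) lstruct \<Rightarrow> ('a \<Rightarrow> 'b) \<Rightarrow> bool" where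
  "isomorphism ar X Y F \<longleftrightarrow> bij_betw F (univ X) (univ Y) \<and>
     (\<forall>i xs. length xs = ar i \<and> set xs \<subseteq> univ X \<longrightarrow>
        (xs \<in> rels X i \<longleftrightarrow> map F xs \<in> rels Y i))"

definition isomorphic :: "('i \<Rightarrow> nat) \<Rightarrow> ('i, 'a) lstruct \<Rightarrow> ('i, 'b) lstruct \<Rightarrow> bool" where
  "isomorphic ar X Y \<longleftrightarrow> (\<exists>F. isomorphism ar X Y F)"

text \<open>Weak reversibility. The structures Y range over structures on the same carrier
type as X; since Y \<sim>c X forces a bijection between the universes, this loses nothing.\<close>
definition weakly_reversible :: "('i \<Rightarrow> nat) \<Rightarrow> ('i, 'a) lstruct \<Rightarrow> bool" where
  "weakly_reversible ar X \<longleftrightarrow>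
     (\<forall>Y :: ('i, 'a) lstruct. is_struct ar Y \<and> cond_equiv Y X \<longrightarrow> isomorphic ar Y X)"

text \<open>Infinitary formulas are represented semantically: a formula is its meaning,
a function of a structure and an assignment of elements to the variables v_n (n :: nat).\<close>
type_synonym ('i, 'a) fsem = "('i, 'a) lstruct \<Rightarrow> (nat \<Rightarrow> 'a) \<Rightarrow> bool"

inductive_set Pinf :: "('i \<Rightarrow> nat) \<Rightarrow> ('i, 'a) fsem set" for ar where
  P_eq:   "(\<lambda>M s. s a = s b) \<in> Pinf ar"
| P_neq:  "(\<lambda>M s. s a \<noteq> s b) \<in> Pinf ar"
| P_rel:  "length vs = ar i \<Longrightarrow> (\<lambda>M s. map s vs \<in> rels M i) \<in> Pinf ar"
| P_all:  "\<phi> \<in> Pinf ar \<Longrightarrow> (\<lambda>M s. \<forall>x \<in> univ M. \<phi> M (s(v := x))) \<in> Pinf ar"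
| P_ex:   "\<phi> \<in> Pinf ar \<Longrightarrow> (\<lambda>M s. \<exists>x \<in> univ M. \<phi> M (s(v := x))) \<in> Pinf ar"
| P_conj: "(\<forall>\<psi> \<in> S. \<psi> \<in> Pinf ar) \<Longrightarrow> (\<lambda>M s. \<forall>\<phi> \<in> S. \<phi> M s) \<in> Pinf ar"
| P_disj: "(\<forall>\<psi> \<in> S. \<psi> \<in> Pinf ar) \<Longrightarrow> (\<lambda>M s. \<exists>\<phi> \<in> S. \<phi> M s) \<in> Pinf ar"

inductive_set Ninf :: "('i \<Rightarrow> nat) \<Rightarrow> ('i, 'a) fsem set" for ar where
  N_eq:   "(\<lambda>M s. s a = s b) \<in> Ninf ar"
| N_neq:  "(\<lambda>M s. s a \<noteq> s b) \<in> Ninf ar"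
| N_nrel: "length vs = ar i \<Longrightarrow> (\<lambda>M s. map s vs \<notin> rels M i) \<in> Ninf ar"
| N_all:  "\<phi> \<in> Ninf ar \<Longrightarrow> (\<lambda>M s. \<forall>x \<in> univ M. \<phi> M (s(v := x))) \<in> Ninf ar"
| N_ex:   "\<phi> \<in> Ninf ar \<Longrightarrow> (\<lambda>M s. \<exists>x \<in> univ M. \<phi> M (s(v := x))) \<in> Ninf ar"
| N_conj: "(\<forall>\<psi> \<in> S. \<psi> \<in> Ninf ar) \<Longrightarrow> (\<lambda>M s. \<forall>\<phi> \<in> S. \<phi> M s) \<in> Ninf ar"
| N_disj: "(\<forall>\<psi> \<in> S. \<psi> \<in> Ninf ar) \<Longrightarrow> (\<lambda>M s. \<exists>\<phi> \<in> S. \<phi> M s) \<in> Ninf ar"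

definition asg :: "('i, 'a) lstruct \<Rightarrow> (nat \<Rightarrow> 'a) \<Rightarrow> bool" where
  "asg M s \<longleftrightarrow> range s \<subseteq> univ M"

text \<open>A sentence: a formula whose truth value in every structure does not depend on
the assignment (semantically: no free variables).\<close>
definition sentence :: "('i \<Rightarrow> nat) \<Rightarrow> ('i, 'a) fsem \<Rightarrow> bool" where
  "sentence ar \<phi> \<longleftrightarrow> (\<forall>M s s'. is_struct ar M \<and> asg M s \<and> asg M s' \<longrightarrow> (\<phi> M s \<longleftrightarrow> \<phi> M s'))"

definition sat :: "('i, 'a) lstruct \<Rightarrow> ('i, 'a) fsem \<Rightarrow> bool" where
  "sat M \<phi> \<longleftrightarrow> (\<forall>s. asg M s \<longrightarrow> \<phi> M s)"

definition equiv_in :: "('i \<Rightarrow> nat) \<Rightarrow> ('i, 'a) fsem set \<Rightarrow> ('i, 'a) lstruct \<Rightarrow> ('i, 'a) lstruct \<Rightarrow> bool" where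
  "equiv_in ar F X Y \<longleftrightarrow> (\<forall>\<phi> \<in> F. sentence ar \<phi> \<longrightarrow> (sat X \<phi> \<longleftrightarrow> sat Y \<phi>))"

definition Th :: "('i \<Rightarrow> nat) \<Rightarrow> ('i, 'a) fsem set \<Rightarrow> ('i, 'a) lstruct \<Rightarrow> ('i, 'a) fsem set" where
  "Th ar F X = {\<phi> \<in> F. sentence ar \<phi> \<and> sat X \<phi>}"

end

theory Submission
  imports Defs
begin

text \<open>A condensation preserves every positive infinitary formula and its inverse preserves every
negative one, so Y \<sim>c X implies X \<equiv>_P Y and Y |= Th_{P \<union> N}(X). Conversely, for countable
structures a back-and-forth construction yields a condensation from X onto Y as soon as every
P-sentence true in X holds in Y: finite tuples are extended alternately on both sides so that the
P-type of the X-tuple stays included in that of the Y-tuple. An extension step cannot fail, since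
a failure would be witnessed by a single formula of the class, the existentially quantified
conjunction (resp. universally quantified disjunction) of formulas separating the candidate
extensions, true of the X-tuple but not of the Y-tuple. With N in place of P the same
construction gives a condensation from Y onto X. Hence, among countable structures, Y \<sim>c X,
X \<equiv>_P Y and Y |= Th_{P \<union> N}(X) all coincide, and the three conditions quantify over the same Y.\<close>

lemma asg_fun_upd: "asg M s \<Longrightarrow> x \<in> univ M \<Longrightarrow> asg M (s(n := x))"
  by (auto simp: asg_def)

lemma condensation_image: "condensation X Y F \<Longrightarrow> F ` univ X = univ Y"
  by (simp add: condensation_def bij_betw_def)

lemma asg_comp_condensation:
  assumes "condensation X Y F" "asg X s"
  shows "asg Y (F \<circ> s)"
  using assms by (auto simp: asg_def condensation_def bij_betw_def)

lemma asg_condensation_factor: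
  assumes "condensation X Y F" "asg Y t"
  obtains s where "asg X s" "t = F \<circ> s"
proof
  have "t k \<in> F ` univ X" for k
    using assms by (auto simp: asg_def condensation_def bij_betw_def)
  then show "asg X (inv_into (univ X) F \<circ> t)" "t = F \<circ> (inv_into (univ X) F \<circ> t)"
    by (auto simp: asg_def inv_into_into f_inv_into_f)
qed

section \<open>Condensations and infinitary formulas\<close>

lemma Pinf_condensation_preserved:
  assumes F: "condensation X Y F"
  shows "\<phi> \<in> Pinf ar \<Longrightarrow> asg X s \<Longrightarrow> \<phi> X s \<Longrightarrow> \<phi> Y (F \<circ> s)"
proof (induction arbitrary: s rule: Pinf.induct)
  case (P_neq a b)
  have "inj_on F (univ X)" "s a \<in> univ X" "s b \<in> univ X"
    using F P_neq.prems by (auto simp: condensation_def bij_betw_def asg_def)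
  then show ?case
    using P_neq.prems by (auto dest: inj_onD)
next
  case (P_rel vs i)
  then have "map F (map s vs) \<in> rels Y i"
    using F unfolding condensation_def by blast
  then show ?case
    by (simp add: comp_def)
next
  case (P_all \<phi> v)
  show ?case
  proof
    fix y assume "y \<in> univ Y"
    then obtain x where "x \<in> univ X" "y = F x"
      using condensation_image[OF F] by blast
    then show "\<phi> Y ((F \<circ> s)(v := y))"
      using P_all asg_fun_upd fun_upd_comp by metis
  qed
next
  case (P_ex \<phi> v)
  then obtain x where "x \<in> univ X" "\<phi> X (s(v := x))"
    by blast
  moreover have "F x \<in> univ Y"
    using condensation_image[OF F] \<open>x \<in> univ X\<close> by blast
  ultimately show ?case
    using P_ex asg_fun_upd fun_upd_comp by metis
qed auto

lemma Ninf_condensation_reflected: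
  assumes G: "condensation Y X G"
  shows "\<phi> \<in> Ninf ar \<Longrightarrow> asg Y t \<Longrightarrow> \<phi> X (G \<circ> t) \<Longrightarrow> \<phi> Y t"
proof (induction arbitrary: t rule: Ninf.induct)
  case (N_eq a b)
  have "inj_on G (univ Y)" "t a \<in> univ Y" "t b \<in> univ Y"
    using G N_eq.prems by (auto simp: condensation_def bij_betw_def asg_def)
  then show ?case
    using N_eq.prems by (auto dest: inj_onD)
next
  case (N_nrel vs i)
  then have "map G (map t vs) \<notin> rels X i"
    by (simp add: comp_def)
  then show ?case
    using G unfolding condensation_def by blast
next
  case (N_all \<phi> v)
  show ?case
  proof
    fix y assume "y \<in> univ Y"
    then have "G y \<in> univ X"
      using condensation_image[OF G] by blast
    then show "\<phi> Y (t(v := y))"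
      using N_all \<open>y \<in> univ Y\<close> asg_fun_upd fun_upd_comp by metis
  qed
next
  case (N_ex \<phi> v)
  then obtain x where "x \<in> univ X" "\<phi> X ((G \<circ> t)(v := x))"
    by blast
  moreover obtain y where "y \<in> univ Y" "x = G y"
    using condensation_image[OF G] \<open>x \<in> univ X\<close> by blast
  ultimately show ?case
    using N_ex asg_fun_upd fun_upd_comp by metis
qed auto

lemma sat_Pinf_condensation:
  assumes "condensation X Y F" "\<phi> \<in> Pinf ar" "sat X \<phi>"
  shows "sat Y \<phi>"
  unfolding sat_def
proof (intro allI impI)
  fix t assume "asg Y t"
  then obtain s where "asg X s" "t = F \<circ> s"
    using asg_condensation_factor assms(1) by blast
  then show "\<phi> Y t"
    using Pinf_condensation_preserved[OF assms(1,2)] assms(3) by (auto simp: sat_def)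
qed

lemma sat_Ninf_condensation:
  assumes "condensation Y X G" "\<phi> \<in> Ninf ar" "sat X \<phi>"
  shows "sat Y \<phi>"
  unfolding sat_def
proof (intro allI impI)
  fix t assume t: "asg Y t"
  then have "\<phi> X (G \<circ> t)"
    using assms(3) asg_comp_condensation[OF assms(1) t] unfolding sat_def by blast
  then show "\<phi> Y t"
    using Ninf_condensation_reflected[OF assms(1,2) t] by blast
qed

section \<open>Back and forth\<close>

text \<open>Formulas are semantic, so "the free variables are among v_0, ..., v_{n-1}" becomes
invariance under changing the assignment at the other variables.\<close>

definition depends_below :: "('i \<Rightarrow> nat) \<Rightarrow> nat \<Rightarrow> ('i, 'a) fsem \<Rightarrow> bool" where
  "depends_below ar n \<phi> \<longleftrightarrow> (\<forall>M s s'. is_struct ar M \<and> asg M s \<and> asg M s' \<and> (\<forall>k<n. s k = s' k)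
      \<longrightarrow> (\<phi> M s \<longleftrightarrow> \<phi> M s'))"

lemma depends_belowI:
  assumes "\<And>M s s'. is_struct ar M \<Longrightarrow> asg M s \<Longrightarrow> asg M s' \<Longrightarrow> \<forall>k<n. s k = s' k \<Longrightarrow>
    \<phi> M s \<longleftrightarrow> \<phi> M s'"
  shows "depends_below ar n \<phi>"
  using assms by (simp add: depends_below_def)

lemma depends_belowD:
  assumes "depends_below ar n \<phi>" "is_struct ar M" "asg M s" "asg M s'" "\<forall>k<n. s k = s' k"
  shows "\<phi> M s \<longleftrightarrow> \<phi> M s'"
  using assms by (simp add: depends_below_def)

lemma depends_below_0_iff_sentence: "depends_below ar 0 \<phi> \<longleftrightarrow> sentence ar \<phi>"
  by (simp add: depends_below_def sentence_def)

lemma depends_below_Ball: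
  assumes "\<And>\<phi>. \<phi> \<in> S \<Longrightarrow> depends_below ar n \<phi>"
  shows "depends_below ar n (\<lambda>M s. \<forall>\<phi>\<in>S. \<phi> M s)"
  by (rule depends_belowI, rule ball_cong[OF refl], rule depends_belowD[OF assms]; assumption)

lemma depends_below_Bex:
  assumes "\<And>\<phi>. \<phi> \<in> S \<Longrightarrow> depends_below ar n \<phi>"
  shows "depends_below ar n (\<lambda>M s. \<exists>\<phi>\<in>S. \<phi> M s)"
  by (rule depends_belowI, rule bex_cong[OF refl], rule depends_belowD[OF assms]; assumption)

lemma depends_below_Suc_fun_upd:
  assumes "depends_below ar (Suc n) \<phi>" "is_struct ar M" "asg M s" "asg M s'"
    and "\<forall>k<n. s k = s' k" "x \<in> univ M"
  shows "\<phi> M (s(n := x)) \<longleftrightarrow> \<phi> M (s'(n := x))"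
proof (rule depends_belowD[OF assms(1,2)])
  show "asg M (s(n := x))" "asg M (s'(n := x))" "\<forall>k<Suc n. (s(n := x)) k = (s'(n := x)) k"
    using assms by (auto simp: asg_fun_upd less_Suc_eq)
qed

lemma depends_below_Bex_univ:
  assumes "depends_below ar (Suc n) \<phi>"
  shows "depends_below ar n (\<lambda>M s. \<exists>x\<in>univ M. \<phi> M (s(n := x)))"
  by (rule depends_belowI, rule bex_cong[OF refl], rule depends_below_Suc_fun_upd[OF assms])

lemma depends_below_Ball_univ:
  assumes "depends_below ar (Suc n) \<phi>"
  shows "depends_below ar n (\<lambda>M s. \<forall>x\<in>univ M. \<phi> M (s(n := x)))"
  by (rule depends_belowI, rule ball_cong[OF refl], rule depends_below_Suc_fun_upd[OF assms])

lemma sat_if_sentence: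
  assumes "sentence ar \<phi>" "is_struct ar M" "asg M s" "\<phi> M s"
  shows "sat M \<phi>"
  unfolding sat_def
proof (intro allI impI)
  fix s' assume "asg M s'"
  then show "\<phi> M s'"
    using assms(1)[unfolded sentence_def, rule_format, of M s s'] assms(2-4) by simp
qed

text \<open>The atoms P M i xs are xs \<in> rels M i for C = P_{\<infinity>\<omega>} and xs \<notin> rels M i for C = N_{\<infinity>\<omega>}.\<close>

locale back_and_forth =
  fixes ar :: "'i \<Rightarrow> nat" and C :: "('i, 'a) fsem set"
    and P :: "('i, 'a) lstruct \<Rightarrow> 'i \<Rightarrow> 'a list \<Rightarrow> bool"
    and X Y :: "('i, 'a) lstruct"
  assumes eq_in_C: "(\<lambda>M s. s a = s b) \<in> C"
    and neq_in_C: "(\<lambda>M s. s a \<noteq> s b) \<in> C"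
    and atom_in_C: "length vs = ar i \<Longrightarrow> (\<lambda>M s. P M i (map s vs)) \<in> C"
    and Ball_univ_in_C: "\<phi> \<in> C \<Longrightarrow> (\<lambda>M s. \<forall>x\<in>univ M. \<phi> M (s(v := x))) \<in> C"
    and Bex_univ_in_C: "\<phi> \<in> C \<Longrightarrow> (\<lambda>M s. \<exists>x\<in>univ M. \<phi> M (s(v := x))) \<in> C"
    and Ball_in_C: "S \<subseteq> C \<Longrightarrow> (\<lambda>M s. \<forall>\<phi>\<in>S. \<phi> M s) \<in> C"
    and Bex_in_C: "S \<subseteq> C \<Longrightarrow> (\<lambda>M s. \<exists>\<phi>\<in>S. \<phi> M s) \<in> C"
    and struct_X: "is_struct ar X" and struct_Y: "is_struct ar Y"
    and countable_X: "countable (univ X)" and countable_Y: "countable (univ Y)"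
    and sentence_transfer: "\<phi> \<in> C \<Longrightarrow> sentence ar \<phi> \<Longrightarrow> sat X \<phi> \<Longrightarrow> sat Y \<phi>"
begin

definition type_incl :: "nat \<Rightarrow> (nat \<Rightarrow> 'a) \<Rightarrow> (nat \<Rightarrow> 'a) \<Rightarrow> bool" where
  "type_incl n s t \<longleftrightarrow> asg X s \<and> asg Y t \<and> (\<forall>\<phi>\<in>C. depends_below ar n \<phi> \<longrightarrow> \<phi> X s \<longrightarrow> \<phi> Y t)"

lemma type_incl_0:
  assumes "asg X s" "asg Y t"
  shows "type_incl 0 s t"
proof -
  have "\<phi> Y t" if "\<phi> \<in> C" "sentence ar \<phi>" "\<phi> X s" for \<phi>
  proof -
    have "sat Y \<phi>"
      using sentence_transfer sat_if_sentence struct_X that assms(1) by blast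
    then show ?thesis
      using assms(2) by (simp add: sat_def)
  qed
  then show ?thesis
    using assms unfolding type_incl_def depends_below_0_iff_sentence by blast
qed

lemma type_incl_forth:
  assumes st: "type_incl n s t" and a: "a \<in> univ X"
  shows "\<exists>b\<in>univ Y. type_incl (Suc n) (s(n := a)) (t(n := b))"
proof (rule ccontr)
  assume "\<not> ?thesis"
  then have "\<forall>b\<in>univ Y. \<exists>\<phi>\<in>C. depends_below ar (Suc n) \<phi> \<and> \<phi> X (s(n := a)) \<and> \<not> \<phi> Y (t(n := b))"
    using st a by (auto simp: type_incl_def asg_fun_upd)
  then obtain sep where sep: "\<And>b. b \<in> univ Y \<Longrightarrow>
      sep b \<in> C \<and> depends_below ar (Suc n) (sep b) \<and> sep b X (s(n := a)) \<and> \<not> sep b Y (t(n := b))"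
    by metis
  define \<chi> where "\<chi> = (\<lambda>M u. \<exists>x\<in>univ M. \<forall>\<psi>\<in>sep ` univ Y. \<psi> M (u(n := x)))"
  have "\<chi> \<in> C"
    unfolding \<chi>_def using sep by (intro Bex_univ_in_C Ball_in_C) auto
  moreover have "depends_below ar n \<chi>"
    unfolding \<chi>_def using sep by (intro depends_below_Bex_univ depends_below_Ball) auto
  moreover have "\<chi> X s"
    unfolding \<chi>_def using sep a by auto
  ultimately have "\<chi> Y t"
    using st by (auto simp: type_incl_def)
  then show False
    unfolding \<chi>_def using sep by auto
qed

lemma type_incl_back:
  assumes st: "type_incl n s t" and b: "b \<in> univ Y"
  shows "\<exists>a\<in>univ X. type_incl (Suc n) (s(n := a)) (t(n := b))"
proof (rule ccontr)
  assume "\<not> ?thesis"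
  then have "\<forall>a\<in>univ X. \<exists>\<phi>\<in>C. depends_below ar (Suc n) \<phi> \<and> \<phi> X (s(n := a)) \<and> \<not> \<phi> Y (t(n := b))"
    using st b by (auto simp: type_incl_def asg_fun_upd)
  then obtain sep where sep: "\<And>a. a \<in> univ X \<Longrightarrow>
      sep a \<in> C \<and> depends_below ar (Suc n) (sep a) \<and> sep a X (s(n := a)) \<and> \<not> sep a Y (t(n := b))"
    by metis
  define \<chi> where "\<chi> = (\<lambda>M u. \<forall>x\<in>univ M. \<exists>\<psi>\<in>sep ` univ X. \<psi> M (u(n := x)))"
  have "\<chi> \<in> C"
    unfolding \<chi>_def using sep by (intro Ball_univ_in_C Bex_in_C) auto
  moreover have "depends_below ar n \<chi>"
    unfolding \<chi>_def using sep by (intro depends_below_Ball_univ depends_below_Bex) auto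
  moreover have "\<chi> X s"
    unfolding \<chi>_def using sep by auto
  ultimately have "\<chi> Y t"
    using st by (auto simp: type_incl_def)
  then show False
    unfolding \<chi>_def using sep b by auto
qed

lemma type_incl_eq_iff:
  assumes "type_incl n s t" "i < n" "j < n"
  shows "s i = s j \<longleftrightarrow> t i = t j"
proof -
  have "depends_below ar n (\<lambda>M s. s i = s j)" "depends_below ar n (\<lambda>M s. s i \<noteq> s j)"
    using assms by (auto intro!: depends_belowI)
  then show ?thesis
    using assms(1) eq_in_C neq_in_C unfolding type_incl_def by blast
qed

lemma type_incl_atom:
  assumes "type_incl n s t" "length vs = ar i" "set vs \<subseteq> {..<n}" "P X i (map s vs)"
  shows "P Y i (map t vs)"
proof -
  have "depends_below ar n (\<lambda>M s. P M i (map s vs))"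
    using assms(3) by (intro depends_belowI arg_cong[where f = "P _ i"] map_cong) auto
  then show ?thesis
    using assms atom_in_C unfolding type_incl_def by blast
qed

text \<open>The back-and-forth chain: step k places the (k div 2)-th element of X (k even) or
of Y (k odd) at variable k and matches it on the other side.\<close>

definition extends :: "nat \<Rightarrow> (nat \<Rightarrow> 'a) \<times> (nat \<Rightarrow> 'a) \<Rightarrow> (nat \<Rightarrow> 'a) \<times> (nat \<Rightarrow> 'a) \<Rightarrow> bool" where
  "extends k p q \<longleftrightarrow> (\<exists>a b. q = ((fst p)(k := a), (snd p)(k := b)) \<and>
     (if even k then a = from_nat_into (univ X) (k div 2) else b = from_nat_into (univ Y) (k div 2)) \<and>
     type_incl (Suc k) (fst q) (snd q))"

lemma univ_X_nonempty: "univ X \<noteq> {}" and univ_Y_nonempty: "univ Y \<noteq> {}"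
  using struct_X struct_Y by (auto simp: is_struct_def)

lemma extends_exists:
  assumes "type_incl k (fst p) (snd p)"
  shows "\<exists>q. extends k p q"
proof (cases "even k")
  case True
  then show ?thesis
    using type_incl_forth[OF assms from_nat_into[OF univ_X_nonempty]]
    by (force simp: extends_def)
next
  case False
  then show ?thesis
    using type_incl_back[OF assms from_nat_into[OF univ_Y_nonempty]]
    by (force simp: extends_def)
qed

primrec chain :: "nat \<Rightarrow> (nat \<Rightarrow> 'a) \<times> (nat \<Rightarrow> 'a)" where
  "chain 0 = (\<lambda>_. from_nat_into (univ X) 0, \<lambda>_. from_nat_into (univ Y) 0)"
| "chain (Suc k) = (SOME q. extends k (chain k) q)"

declare chain.simps(2) [simp del]

lemma type_incl_chain: "type_incl k (fst (chain k)) (snd (chain k))"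
proof (induction k)
  case 0
  show ?case
    by (auto intro!: type_incl_0 simp: asg_def from_nat_into univ_X_nonempty univ_Y_nonempty)
next
  case (Suc k)
  have "extends k (chain k) (chain (Suc k))"
    unfolding chain.simps(2) using extends_exists[OF Suc.IH] by (rule someI_ex)
  then show ?case
    unfolding extends_def by blast
qed

lemma extends_chain: "extends k (chain k) (chain (Suc k))"
  unfolding chain.simps(2) using extends_exists[OF type_incl_chain] by (rule someI_ex)

lemma chain_Suc:
  "i \<noteq> k \<Longrightarrow> fst (chain (Suc k)) i = fst (chain k) i"
  "i \<noteq> k \<Longrightarrow> snd (chain (Suc k)) i = snd (chain k) i"
  "even k \<Longrightarrow> fst (chain (Suc k)) k = from_nat_into (univ X) (k div 2)"
  "odd k \<Longrightarrow> snd (chain (Suc k)) k = from_nat_into (univ Y) (k div 2)"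
  using extends_chain[of k] by (auto simp: extends_def)

definition s_lim :: "nat \<Rightarrow> 'a" where "s_lim i = fst (chain (Suc i)) i"
definition t_lim :: "nat \<Rightarrow> 'a" where "t_lim i = snd (chain (Suc i)) i"

lemma chain_eq_lim: "i < k \<Longrightarrow> fst (chain k) i = s_lim i \<and> snd (chain k) i = t_lim i"
proof (induction k)
  case (Suc k)
  then show ?case
    by (cases "i = k") (auto simp: chain_Suc s_lim_def t_lim_def)
qed simp

lemma univ_X_eq: "univ X = range s_lim"
proof
  have "range (fst (chain (Suc i))) \<subseteq> univ X" for i
    using type_incl_chain by (simp add: type_incl_def asg_def)
  then show "range s_lim \<subseteq> univ X"
    by (auto simp: s_lim_def)
  have "s_lim (2 * m) = from_nat_into (univ X) m" for m
    using chain_Suc(3)[of "2 * m"] by (simp add: s_lim_def)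
  then show "univ X \<subseteq> range s_lim"
    using from_nat_into_surj[OF countable_X] by (metis rangeI subsetI)
qed

lemma univ_Y_eq: "univ Y = range t_lim"
proof
  have "range (snd (chain (Suc i))) \<subseteq> univ Y" for i
    using type_incl_chain by (simp add: type_incl_def asg_def)
  then show "range t_lim \<subseteq> univ Y"
    by (auto simp: t_lim_def)
  have "t_lim (Suc (2 * m)) = from_nat_into (univ Y) m" for m
    using chain_Suc(4)[of "Suc (2 * m)"] by (simp add: t_lim_def)
  then show "univ Y \<subseteq> range t_lim"
    using from_nat_into_surj[OF countable_Y] by (metis rangeI subsetI)
qed

lemma s_lim_eq_iff: "s_lim i = s_lim j \<longleftrightarrow> t_lim i = t_lim j"
  using type_incl_eq_iff[OF type_incl_chain, of i "Suc (max i j)" j]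
    chain_eq_lim[of i "Suc (max i j)"] chain_eq_lim[of j "Suc (max i j)"]
  by simp

definition lim_map :: "'a \<Rightarrow> 'a" where "lim_map x = t_lim (inv s_lim x)"

lemma lim_map_s_lim: "lim_map (s_lim i) = t_lim i"
  unfolding lim_map_def using s_lim_eq_iff f_inv_into_f[of "s_lim i" s_lim UNIV] by blast

lemma bij_betw_lim_map: "bij_betw lim_map (univ X) (univ Y)"
proof -
  have "inj_on lim_map (range s_lim)"
    by (auto intro!: inj_onI simp: lim_map_s_lim s_lim_eq_iff)
  moreover have "lim_map ` range s_lim = range t_lim"
    by (auto simp: lim_map_s_lim image_iff)
  ultimately show ?thesis
    by (simp add: bij_betw_def univ_X_eq univ_Y_eq)
qed

lemma lim_map_preserves:
  assumes "length xs = ar i" "set xs \<subseteq> univ X" "P X i xs"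
  shows "P Y i (map lim_map xs)"
proof -
  obtain vs where xs: "xs = map s_lim vs"
    using assms(2) ex_map_conv[of xs s_lim] by (auto simp: univ_X_eq)
  obtain k where k: "set vs \<subseteq> {..<k}"
    using finite_nat_set_iff_bounded[of "set vs"] by auto
  have "map (fst (chain k)) vs = xs" "map (snd (chain k)) vs = map lim_map xs"
    using k chain_eq_lim by (auto simp: xs lim_map_s_lim)
  moreover have "length vs = ar i"
    using assms(1) xs by simp
  ultimately show ?thesis
    using type_incl_atom[OF type_incl_chain _ k] assms(3) by metis
qed

end

lemma condensation_if_Pinf_transfer:
  assumes "is_struct ar X" "is_struct ar Y" "countable (univ X)" "countable (univ Y)"
    and "\<And>\<phi>. \<phi> \<in> Pinf ar \<Longrightarrow> sentence ar \<phi> \<Longrightarrow> sat X \<phi> \<Longrightarrow> sat Y \<phi>"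
  shows "\<exists>F. condensation X Y F"
proof -
  interpret back_and_forth ar "Pinf ar" "\<lambda>M i xs. xs \<in> rels M i" X Y
    by unfold_locales (auto intro: Pinf.intros assms)
  have "condensation X Y lim_map"
    using bij_betw_lim_map lim_map_preserves assms(1) by (auto simp: condensation_def is_struct_def)
  then show ?thesis
    by blast
qed

lemma condensation_inv_if_reflects:
  assumes "is_struct ar Y" "bij_betw F (univ X) (univ Y)"
    and "\<And>i xs. length xs = ar i \<Longrightarrow> set xs \<subseteq> univ X \<Longrightarrow> xs \<notin> rels X i \<Longrightarrow> map F xs \<notin> rels Y i"
  shows "condensation Y X (inv_into (univ X) F)"
  unfolding condensation_def
proof (intro conjI allI ballI)
  show "bij_betw (inv_into (univ X) F) (univ Y) (univ X)"
    using assms(2) by (rule bij_betw_inv_into)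
  fix i ys assume ys: "ys \<in> rels Y i"
  then have len: "length ys = ar i" and sub: "set ys \<subseteq> F ` univ X"
    using assms(1,2) by (auto simp: is_struct_def bij_betw_def)
  have "set (map (inv_into (univ X) F) ys) \<subseteq> univ X"
    using sub by (auto intro: inv_into_into)
  moreover have "map F (map (inv_into (univ X) F) ys) = ys"
    using sub by (simp add: map_idI f_inv_into_f subset_iff)
  ultimately show "map (inv_into (univ X) F) ys \<in> rels X i"
    using assms(3)[of "map (inv_into (univ X) F) ys" i] ys len by auto
qed

lemma condensation_if_Ninf_transfer:
  assumes "is_struct ar X" "is_struct ar Y" "countable (univ X)" "countable (univ Y)"
    and "\<And>\<phi>. \<phi> \<in> Ninf ar \<Longrightarrow> sentence ar \<phi> \<Longrightarrow> sat X \<phi> \<Longrightarrow> sat Y \<phi>"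
  shows "\<exists>G. condensation Y X G"
proof -
  interpret back_and_forth ar "Ninf ar" "\<lambda>M i xs. xs \<notin> rels M i" X Y
    by unfold_locales (auto intro: Ninf.intros assms)
  show ?thesis
    using condensation_inv_if_reflects[OF assms(2) bij_betw_lim_map] lim_map_preserves by blast
qed

section \<open>The three conditions\<close>

lemma countable_if_cond_equiv:
  assumes "cond_equiv Y X" "countable (univ X)"
  shows "countable (univ Y)"
proof -
  obtain G where "condensation X Y G"
    using assms(1) unfolding cond_equiv_def by blast
  then show ?thesis
    using condensation_image countable_image assms(2) by metis
qed

lemma cond_equiv_iff_equiv_Pinf:
  assumes "is_struct ar X" "is_struct ar Y" "countable (univ X)" "countable (univ Y)"
  shows "cond_equiv Y X \<longleftrightarrow> equiv_in ar (Pinf ar) X Y"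
proof
  assume "cond_equiv Y X"
  then obtain F G where "condensation Y X F" "condensation X Y G"
    unfolding cond_equiv_def by blast
  then show "equiv_in ar (Pinf ar) X Y"
    unfolding equiv_in_def using sat_Pinf_condensation by blast
next
  assume "equiv_in ar (Pinf ar) X Y"
  then show "cond_equiv Y X"
    using condensation_if_Pinf_transfer[of ar X Y] condensation_if_Pinf_transfer[of ar Y X] assms
    unfolding cond_equiv_def equiv_in_def by blast
qed

lemma cond_equiv_iff_sat_Th:
  assumes "is_struct ar X" "is_struct ar Y" "countable (univ X)" "countable (univ Y)"
  shows "cond_equiv Y X \<longleftrightarrow> (\<forall>\<phi> \<in> Th ar (Pinf ar \<union> Ninf ar) X. sat Y \<phi>)"
proof
  assume "cond_equiv Y X"
  then obtain F G where "condensation Y X F" "condensation X Y G"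
    unfolding cond_equiv_def by blast
  then show "\<forall>\<phi> \<in> Th ar (Pinf ar \<union> Ninf ar) X. sat Y \<phi>"
    unfolding Th_def using sat_Pinf_condensation sat_Ninf_condensation by blast
next
  assume "\<forall>\<phi> \<in> Th ar (Pinf ar \<union> Ninf ar) X. sat Y \<phi>"
  then show "cond_equiv Y X"
    using condensation_if_Pinf_transfer[of ar X Y] condensation_if_Ninf_transfer[of ar X Y] assms
    unfolding cond_equiv_def Th_def by blast
qed

theorem theorem4p3:
  fixes ar :: "'i \<Rightarrow> nat" and X :: "('i, nat) lstruct"
  assumes "is_struct ar X" and "countable (univ X)"
  shows "(weakly_reversible ar X \<longleftrightarrow>
           (\<forall>Y :: ('i, nat) lstruct. is_struct ar Y \<and> countable (univ Y) \<and>
              equiv_in ar (Pinf ar) X Y \<longrightarrow> isomorphic ar Y X))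
       \<and> (weakly_reversible ar X \<longleftrightarrow>
           (\<forall>Y :: ('i, nat) lstruct. is_struct ar Y \<and> countable (univ Y) \<and>
              (\<forall>\<phi> \<in> Th ar (Pinf ar \<union> Ninf ar) X. sat Y \<phi>) \<longrightarrow> isomorphic ar Y X))"
proof -
  have wr: "weakly_reversible ar X \<longleftrightarrow>
      (\<forall>Y :: ('i, nat) lstruct. is_struct ar Y \<and> countable (univ Y) \<and> cond_equiv Y X \<longrightarrow>
        isomorphic ar Y X)"
    unfolding weakly_reversible_def using countable_if_cond_equiv assms(2) by blast
  have "is_struct ar Y \<and> countable (univ Y) \<and> cond_equiv Y X \<longleftrightarrow>
      is_struct ar Y \<and> countable (univ Y) \<and> equiv_in ar (Pinf ar) X Y"
    for Y :: "('i, nat) lstruct"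
    using cond_equiv_iff_equiv_Pinf[OF assms(1) _ assms(2)] by blast
  moreover have "is_struct ar Y \<and> countable (univ Y) \<and> cond_equiv Y X \<longleftrightarrow>
      is_struct ar Y \<and> countable (univ Y) \<and> (\<forall>\<phi> \<in> Th ar (Pinf ar \<union> Ninf ar) X. sat Y \<phi>)"
    for Y :: "('i, nat) lstruct"
    using cond_equiv_iff_sat_Th[OF assms(1) _ assms(2)] by blast
  ultimately show ?thesis
    unfolding wr by simp
qed

end
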